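(* Let $D\in(0,2)$ and let $\gamma$ satisfy $0<\gamma<2-D$. Let $u_1,u_2,\dots,u_j\in[0,1]$ be arbitrary. Define the SF-OGD sequence $\epsilon_1,\epsilon_2,\dots$ as follows: $\epsilon_1\in[-D-\gamma,\,D+\gamma]$, and for $\tau\ge 1$, with $E_\tau=D\cdot\mathrm{sign}(u_\tau-0.5)$, $$g_\tau=\nabla_\epsilon L(E_\tau,\epsilon_\tau)=-\begin{cases}0 & \text{if } E_\tau\epsilon_\tau>0 \text{ and } |\epsilon_\tau|>D,\\[2pt] \dfrac{u_\tau-0.5}{1+\epsilon_\tau(u_\tau-0.5)} & \text{otherwise,}\end{cases}$$ $$\epsilon_{\tau+1}=\epsilon_\tau-\gamma\,\frac{g_\tau}{\sqrt{\sum_{t=1}^{\tau} g_t^2}}$$ (the update term being $0$ when $g_\tau=0$). Then $\epsilon_\tau\in[-D-\gamma,\,D+\gamma]$ for all $1\le\tau\le j$.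
   Context: This is the scale-free online gradient descent (SF-OGD) scheme for learning a betting variable $\epsilon_\tau$ in the wealth process $S_\tau=S_{\tau-1}(1+\epsilon_\tau(u_\tau-0.5))$. The gradient $g_\tau$ is the (sub)gradient in $\epsilon$ of the clip-aware loss $L(E_\tau,\epsilon)=-\log(1+E_\tau(u_\tau-0.5))$ if $E_\tau\epsilon>0$ and $|\epsilon|>D$, and $L(E_\tau,\epsilon)=-\log(1+\epsilon(u_\tau-0.5))$ otherwise. *)

theory Defs
  imports Complex_Main
begin

definition sf_grad :: "real \<Rightarrow> real \<Rightarrow> real \<Rightarrow> real" where
  "sf_grad D u e =
     (let E = D * sgn (u - 1/2) in
      - (if E * e > 0 \<and> \<bar>e\<bar> > D then 0 else (u - 1/2) / (1 + e * (u - 1/2))))"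

end

theory Submission
  imports Defs
begin

(* Each normalised step has length at most gamma, since g_tau^2 is one of the summands under
   the square root, so from [-D, D] the iterate cannot leave [-D-gamma, D+gamma]. Beyond D a
   nonzero gradient means the clip case did not apply, so u_tau - 1/2 and eps_tau have opposite
   signs; since gamma < 2 - D keeps |eps_tau| < 2, the denominator 1 + eps_tau (u_tau - 1/2) is
   positive, the gradient has the sign of eps_tau, and the step moves back towards the origin. *)

lemma normalized_step_abs_le:
  fixes \<gamma> g S :: real
  assumes "0 \<le> \<gamma>" and "g\<^sup>2 \<le> S"
  shows "\<bar>\<gamma> * g / sqrt S\<bar> \<le> \<gamma>"
proof -
  have S: "0 \<le> S"
    using order_trans[OF zero_le_power2 assms(2)] .
  have "\<bar>g\<bar> \<le> sqrt S"
    using real_sqrt_le_mono[OF assms(2)] by simp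
  with S have "\<bar>g\<bar> / sqrt S \<le> 1"
    by (cases "S = 0") (auto simp: divide_le_eq_1)
  then show ?thesis
    using assms(1) S mult_left_mono[of "\<bar>g\<bar> / sqrt S" 1 \<gamma>] by (simp add: abs_mult)
qed

lemma one_plus_mult_centered_pos:
  fixes e u :: real
  assumes "\<bar>e\<bar> < 2" and "u \<in> {0..1}"
  shows "0 < 1 + e * (u - 1/2)"
proof -
  have "\<bar>u - 1/2\<bar> \<le> 1/2"
    using assms(2) unfolding abs_le_iff atLeastAtMost_iff by linarith
  then have "\<bar>e\<bar> * \<bar>u - 1/2\<bar> \<le> \<bar>e\<bar> * (1/2)"
    by (intro mult_left_mono) auto
  then have "\<bar>e * (u - 1/2)\<bar> < 1"
    using assms(1) by (simp add: abs_mult)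
  then show ?thesis by linarith
qed

lemma sf_grad_same_sign_outside:
  fixes D u e :: real
  assumes "0 < D" "D < \<bar>e\<bar>" "\<bar>e\<bar> < 2" "u \<in> {0..1}"
    and "sf_grad D u e \<noteq> 0"
  shows "0 < e * sf_grad D u e"
proof -
  define c where "c = u - 1/2"
  have unclipped: "\<not> (0 < D * sgn c * e)"
    and grad: "sf_grad D u e = - (c / (1 + e * c))"
    using assms(2,5) by (auto simp: sf_grad_def c_def Let_def split: if_splits)
  have "c \<noteq> 0"
    using assms(5) grad by auto
  with unclipped assms(1,2) have "e * c < 0"
    by (cases c "0::real" rule: linorder_cases; cases e "0::real" rule: linorder_cases)
       (auto simp: mult_pos_neg mult_neg_neg mult_pos_pos mult_neg_pos)
  moreover have "0 < 1 + e * c"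
    using one_plus_mult_centered_pos[OF assms(3,4)] by (simp add: c_def)
  ultimately show ?thesis
    by (simp add: grad divide_neg_pos)
qed

lemma sf_step_in_interval:
  fixes D \<gamma> u e S :: real
  assumes "0 < D" and "0 < \<gamma>" "\<gamma> < 2 - D"
    and "u \<in> {0..1}" and "e \<in> {-D-\<gamma>..D+\<gamma>}"
    and "(sf_grad D u e)\<^sup>2 \<le> S"
  shows "e - (if sf_grad D u e = 0 then 0 else \<gamma> * sf_grad D u e / sqrt S) \<in> {-D-\<gamma>..D+\<gamma>}"
proof (cases "sf_grad D u e = 0")
  case True
  then show ?thesis using assms(5) by simp
next
  case False
  define g where "g = sf_grad D u e"
  define s where "s = \<gamma> * g / sqrt S"
  have step: "\<bar>s\<bar> \<le> \<gamma>"
    unfolding s_def g_def using assms(2,6) by (intro normalized_step_abs_le) auto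
  have "e - s \<in> {-D-\<gamma>..D+\<gamma>}"
  proof (cases "\<bar>e\<bar> \<le> D")
    case True
    then show ?thesis using step by auto
  next
    case False
    then have "0 < e * g"
      unfolding g_def using assms \<open>sf_grad D u e \<noteq> 0\<close>
      by (intro sf_grad_same_sign_outside) auto
    moreover have "e * s = \<gamma> * (e * g) / sqrt S"
      by (simp add: s_def)
    ultimately have "0 \<le> e * s"
      using assms(2) order_trans[OF zero_le_power2 assms(6)]
      by (auto intro!: divide_nonneg_nonneg[OF mult_nonneg_nonneg])
    then show ?thesis
      using step False assms(1,5) by (auto simp: zero_le_mult_iff)
  qed
  then show ?thesis
    using \<open>sf_grad D u e \<noteq> 0\<close> by (simp add: s_def g_def)
qed

theorem lemma1:
  fixes D \<gamma> :: real and j :: nat and u \<epsilon> :: "nat \<Rightarrow> real"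
  assumes "0 < D" "D < 2"
    and "0 < \<gamma>" "\<gamma> < 2 - D"
    and "\<forall>\<tau>. 1 \<le> \<tau> \<and> \<tau> \<le> j \<longrightarrow> u \<tau> \<in> {0..1}"
    and "\<epsilon> 1 \<in> {-D-\<gamma>..D+\<gamma>}"
    and "\<forall>\<tau>. 1 \<le> \<tau> \<and> \<tau> < j \<longrightarrow>
           \<epsilon> (\<tau> + 1) = \<epsilon> \<tau> -
             (if sf_grad D (u \<tau>) (\<epsilon> \<tau>) = 0 then 0
              else \<gamma> * sf_grad D (u \<tau>) (\<epsilon> \<tau>) /
                   sqrt (\<Sum>t=1..\<tau>. (sf_grad D (u t) (\<epsilon> t))\<^sup>2))"
  shows "\<forall>\<tau>. 1 \<le> \<tau> \<and> \<tau> \<le> j \<longrightarrow> \<epsilon> \<tau> \<in> {-D-\<gamma>..D+\<gamma>}"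
proof (intro allI impI)
  fix \<tau> assume "1 \<le> \<tau> \<and> \<tau> \<le> j"
  then have "1 \<le> \<tau>" and "\<tau> \<le> j" by auto
  then show "\<epsilon> \<tau> \<in> {-D-\<gamma>..D+\<gamma>}"
  proof (induction \<tau> rule: nat_induct_at_least)
    case base
    then show ?case using assms(6) by simp
  next
    case (Suc \<tau>)
    have "(sf_grad D (u \<tau>) (\<epsilon> \<tau>))\<^sup>2 \<le> (\<Sum>t=1..\<tau>. (sf_grad D (u t) (\<epsilon> t))\<^sup>2)"
      using Suc.hyps by (intro member_le_sum) auto
    from sf_step_in_interval[OF assms(1,3,4) _ _ this]
    show ?case
      using Suc assms(5,7) by simp
  qed
qed

end
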